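(* Let $\alpha,g_0,\lambda,\kappa_0,\omega>0$, let $k>l\ge0$ be integers and put $n=k-l$. For $\Delta\tau>0$ and real $b\neq b'$ define $$I_{kl}(b,b')=\frac{1}{\kappa_0\pi}\int_{-\infty}^{\infty}e^{-i\alpha g_0\Delta\tau\,\omega n\, q}\,\frac{\sin[\kappa_0(q-\frac{2\lambda b}{\alpha g_0\Delta\tau})]}{q-\frac{2\lambda b}{\alpha g_0\Delta\tau}}\,\frac{\sin[\kappa_0(q-\frac{2\lambda b'}{\alpha g_0\Delta\tau})]}{q-\frac{2\lambda b'}{\alpha g_0\Delta\tau}}\,dq.$$ Then $$I_{kl}(b,b')=\frac{i\alpha g_0\Delta\tau}{4\lambda\kappa_0}\,V_{kl}(b,b')\,\Theta(2\kappa_0-\omega\alpha g_0 n\Delta\tau),$$ $$V_{kl}(b,b')=\frac{e^{-2i\lambda\left[\frac{\kappa_0}{\alpha g_0\Delta\tau}(b-b')+\omega n b'\right]}-e^{2i\lambda\left[\frac{\kappa_0}{\alpha g_0\Delta\tau}(b-b')-\omega n b\right]}}{b-b'},$$ with $\Theta$ the Heaviside step function, and $V_{kl}=0$ at $\Delta\tau=2\kappa_0/(\alpha g_0\omega n)$. Consequently all decoherence factors with $k\neq l$ vanish for $\Delta\tau\ge\frac{2\kappa_0}{\alpha g_0\omega}$.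
   Context: This is the decoherence factor for measuring the energy of a quantum harmonic oscillator (eigenvalues $(k+\tfrac12)\hbar\omega$) with probe initial state $\frac{1}{\sqrt{\kappa_0\pi}}\frac{\sin(\kappa_0 q)}{q}$; the factors with $k<l$ are the complex conjugates $I_{lk}=\overline{I_{kl}}$. *)

theory Defs
  imports "HOL-Analysis.Analysis"
begin

text \<open>Heaviside step function (value at 0 is irrelevant for the theorem, since V vanishes there).\<close>
definition heaviside :: "real \<Rightarrow> real" where
  "heaviside x = (if x \<ge> 0 then 1 else 0)"

definition decoh_integrand ::
  "real \<Rightarrow> real \<Rightarrow> real \<Rightarrow> real \<Rightarrow> real \<Rightarrow> int \<Rightarrow> real \<Rightarrow> real \<Rightarrow> real \<Rightarrow> real \<Rightarrow> complex" where
  "decoh_integrand \<alpha> g0 lam \<kappa>0 \<omega> n d\<tau> b b' q =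
     (let c = 2 * lam * b / (\<alpha> * g0 * d\<tau>); c' = 2 * lam * b' / (\<alpha> * g0 * d\<tau>) in
      complex_of_real (1 / (\<kappa>0 * pi)) *
      exp (- \<i> * complex_of_real (\<alpha> * g0 * d\<tau> * \<omega> * real_of_int n * q)) *
      complex_of_real ((sin (\<kappa>0 * (q - c)) / (q - c)) * (sin (\<kappa>0 * (q - c')) / (q - c'))))"

text \<open>Decoherence factor I_kl(b,b'); with n = k - l (possibly negative) this automatically
  satisfies I_lk = conj I_kl.\<close>
definition decoh_factor ::
  "real \<Rightarrow> real \<Rightarrow> real \<Rightarrow> real \<Rightarrow> real \<Rightarrow> nat \<Rightarrow> nat \<Rightarrow> real \<Rightarrow> real \<Rightarrow> real \<Rightarrow> complex" where
  "decoh_factor \<alpha> g0 lam \<kappa>0 \<omega> k l d\<tau> b b' =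
     integral UNIV (decoh_integrand \<alpha> g0 lam \<kappa>0 \<omega> (int k - int l) d\<tau> b b')"

definition V_kl ::
  "real \<Rightarrow> real \<Rightarrow> real \<Rightarrow> real \<Rightarrow> real \<Rightarrow> int \<Rightarrow> real \<Rightarrow> real \<Rightarrow> real \<Rightarrow> complex" where
  "V_kl \<alpha> g0 lam \<kappa>0 \<omega> n d\<tau> b b' =
     (exp (- 2 * \<i> * complex_of_real (lam * (\<kappa>0 / (\<alpha> * g0 * d\<tau>) * (b - b') + \<omega> * real_of_int n * b')))
      - exp (2 * \<i> * complex_of_real (lam * (\<kappa>0 / (\<alpha> * g0 * d\<tau>) * (b - b') - \<omega> * real_of_int n * b))))
     / complex_of_real (b - b')"

end

theory Submission
  imports Defs "HOL-Probability.Sinc_Integral"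
begin

text \<open>
  With \<open>t = \<alpha> g0 \<Delta>\<tau> \<omega> n\<close> and \<open>c = 2\<lambda>b/(\<alpha> g0 \<Delta>\<tau>)\<close>, \<open>c'\<close> likewise, the integrand is
  \<open>exp(-itq) s(q - c) s(q - c')/(\<kappa>\<pi>)\<close> with \<open>s(x) = sin(\<kappa>x)/x\<close>. Splitting
  \<open>1/((q - c)(q - c'))\<close> into partial fractions and the sines into exponentials turns each pole into
  a combination of the kernels \<open>(exp(i\<mu>x) - 1)/x\<close> with \<open>\<mu> \<in> {2\<kappa> - t, -t, -(2\<kappa> + t)}\<close>.
  Over \<open>[-R, R]\<close> such a kernel integrates to an odd part, which tends to 0, plus a difference of
  sine integrals, which tends to \<open>i\<pi> sgn \<mu>\<close>. The integrand is \<open>O(1/q^2)\<close>, so its integral is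
  the limit of these symmetric integrals. When \<open>|t| \<ge> 2\<kappa>\<close> the three signs agree and the
  contributions of the two poles cancel; for \<open>0 < t < 2\<kappa>\<close> they leave the stated two-term formula.
\<close>

section \<open>Principal values on symmetric intervals\<close>

lemma Si_minus: "Si (- x) = - Si x"
  by (cases "x \<ge> 0") (use Si_neg[of x] Si_neg[of "- x"] in auto)

lemma tendsto_Si_mult_at_top:
  assumes "filterlim g at_top F"
  shows "((\<lambda>y. Si (\<mu> * g y)) \<longlongrightarrow> pi / 2 * sgn \<mu>) F"
proof -
  have pos: "((\<lambda>y. Si (m * g y)) \<longlongrightarrow> pi / 2) F" if "m > 0" for m
    using filterlim_compose[OF Si_at_top filterlim_tendsto_pos_mult_at_top[OF tendsto_const that assms]] .
  consider "\<mu> > 0" | "\<mu> = 0" | "\<mu> < 0" by linarith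
  then show ?thesis
  proof cases
    case 3
    have "((\<lambda>y. - Si (- \<mu> * g y)) \<longlongrightarrow> - (pi / 2)) F"
      using 3 by (intro tendsto_minus pos) simp
    with 3 show ?thesis by (simp add: Si_minus)
  qed (use pos Si_minus[of 0] in auto)
qed

lemma integral_odd_symmetric:
  fixes u :: "real \<Rightarrow> real"
  assumes "\<And>x. u (- x) = - u x"
  shows "integral {-a..a} u = 0"
  using Henstock_Kurzweil_Integration.integral_reflect_real[of a "-a" u] by (simp add: assms)

lemma tendsto_integral_shifted_odd:
  fixes u :: "real \<Rightarrow> real"
  assumes odd: "\<And>x. u (- x) = - u x" and cont: "continuous_on UNIV u"
    and decay: "\<And>x. x \<noteq> 0 \<Longrightarrow> \<bar>u x\<bar> \<le> M / \<bar>x\<bar>"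
  shows "((\<lambda>R. integral {-R..R} (\<lambda>q. u (q - p))) \<longlongrightarrow> 0) at_top"
proof (rule Lim_null_comparison)
  have M: "M \<ge> 0" using decay[of 1] by simp
  have bound: "\<bar>integral {-R..R} (\<lambda>q. u (q - p))\<bar> \<le> M / (R - \<bar>p\<bar>) * (2 * \<bar>p\<bar>)"
    if R: "R > \<bar>p\<bar>" for R
  proof -
    define a b r where "a = -R - p" and "b = R - p" and "r = R - \<bar>p\<bar>"
    have order: "a \<le> -r" "-r \<le> r" "r \<le> b" "r > 0" using R by (auto simp: a_def b_def r_def)
    have cont_ab: "continuous_on {x..y} u" for x y by (rule continuous_on_subset[OF cont]) simp
    have tail: "\<bar>u x\<bar> \<le> M / r" if "r \<le> \<bar>x\<bar>" for x
    proof -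
      have "\<bar>u x\<bar> \<le> M / \<bar>x\<bar>" using decay order(4) that by auto
      also have "\<dots> \<le> M / r" using M order(4) that by (intro divide_left_mono) auto
      finally show ?thesis .
    qed
    have "integral {-R..R} (\<lambda>q. u (q - p)) = integral {a..b} u"
      using integral_shift_real_ivl[of a "-p" b u] by (simp add: a_def b_def)
    also have "\<dots> = integral {a..-r} u + integral {-r..r} u + integral {r..b} u"
      using order cont_ab
      by (simp add: Henstock_Kurzweil_Integration.integral_combine integrable_continuous_real)
    also have "integral {-r..r} u = 0" using odd by (rule integral_odd_symmetric)
    finally have "\<bar>integral {-R..R} (\<lambda>q. u (q - p))\<bar> \<le> \<bar>integral {a..-r} u\<bar> + \<bar>integral {r..b} u\<bar>"
      by simp
    also have "\<dots> \<le> M / r * (-r - a) + M / r * (b - r)"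
      using integral_bound[OF order(1) cont_ab, of "M / r"] integral_bound[OF order(3) cont_ab, of "M / r"]
        tail order by (intro add_mono) force+
    also have "\<dots> = M / (R - \<bar>p\<bar>) * (2 * \<bar>p\<bar>)"
      by (simp add: a_def b_def r_def add_divide_distrib[symmetric] algebra_simps)
    finally show ?thesis .
  qed
  show "\<forall>\<^sub>F R in at_top. norm (integral {-R..R} (\<lambda>q. u (q - p))) \<le> M / (R - \<bar>p\<bar>) * (2 * \<bar>p\<bar>)"
    using eventually_gt_at_top[of "\<bar>p\<bar>"] by (rule eventually_mono) (use bound in simp)
  have "filterlim (\<lambda>R. - \<bar>p\<bar> + R) at_top at_top"
    by (rule filterlim_tendsto_add_at_top[OF tendsto_const filterlim_ident])
  then show "((\<lambda>R. M / (R - \<bar>p\<bar>) * (2 * \<bar>p\<bar>)) \<longlongrightarrow> 0) at_top"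
    by (intro tendsto_mult_left_zero tendsto_divide_0[OF tendsto_const] filterlim_at_top_imp_at_infinity)
       simp
qed

lemma tendsto_integral_symmetric_interval:
  fixes f :: "real \<Rightarrow> 'a::banach"
  assumes "(f has_integral I) UNIV"
  shows "((\<lambda>R. integral {-R..R} f) \<longlongrightarrow> I) at_top"
proof (rule tendstoI)
  fix e :: real assume "e > 0"
  have "\<forall>e>0. \<exists>B>0. \<forall>a b. ball 0 B \<subseteq> cbox a b \<longrightarrow> norm (integral (cbox a b) f - I) < e"
    using assms unfolding has_integral_alt' by simp
  with \<open>e > 0\<close> obtain B
    where B: "\<And>a b. ball 0 B \<subseteq> cbox a b \<Longrightarrow> norm (integral (cbox a b) f - I) < e"
    by blast
  have "ball 0 B \<subseteq> cbox (-R) R" if "R \<ge> B" for R :: real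
    using that by (auto simp: dist_real_def)
  with B show "\<forall>\<^sub>F R in at_top. dist (integral {-R..R} f) I < e"
    unfolding dist_norm eventually_at_top_linorder by (metis box_real(2))
qed

lemma sin_of_real_exp:
  "complex_of_real (sin y) = (exp (\<i> * complex_of_real y) - 1 / exp (\<i> * complex_of_real y)) / (2 * \<i>)"
  by (simp add: sin_of_real[symmetric] sin_exp_eq exp_minus inverse_eq_divide)

lemma exp_minus_i_mult_exp_i:
  "exp (- \<i> * complex_of_real a) * exp (\<i> * complex_of_real b) = exp (- \<i> * complex_of_real (a - b))"
  unfolding exp_add[symmetric] by (simp add: algebra_simps)

definition expm1_quot :: "real \<Rightarrow> real \<Rightarrow> complex" where
  "expm1_quot \<mu> x = (exp (\<i> * complex_of_real (\<mu> * x)) - 1) / complex_of_real x"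

lemma cos_minus_one_quot_eq: "(cos (\<mu> * x) - 1) / (x::real) = - \<mu> * sin (\<mu> * x / 2) * sinc (\<mu> * x / 2)"
proof (cases "\<mu> * x = 0")
  case False
  have double: "cos (\<mu> * x) = 1 - 2 * (sin (\<mu> * x / 2))\<^sup>2"
    using cos_double_sin[of "\<mu> * x / 2"] by simp
  show ?thesis using False unfolding double by (simp add: field_simps power2_eq_square)
qed auto

lemma continuous_on_cos_minus_one_quot: "continuous_on UNIV (\<lambda>x. (cos (\<mu> * x) - 1) / (x::real))"
proof -
  have "continuous_on UNIV (\<lambda>x. - \<mu> * sin (\<mu> * x / 2) * sinc (\<mu> * x / 2))"
    by (intro continuous_intros) auto
  then show ?thesis by (simp only: cos_minus_one_quot_eq)
qed

lemma expm1_quot_eq: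
  "expm1_quot \<mu> x = complex_of_real ((cos (\<mu> * x) - 1) / x) + \<i> * complex_of_real (sin (\<mu> * x) / x)"
  unfolding expm1_quot_def cis_conv_exp[symmetric] by (simp add: complex_eq_iff)

lemma has_integral_sin_shift_quot:
  assumes "a \<le> b"
  shows "((\<lambda>q. sin (\<mu> * (q - p)) / (q - p)) has_integral Si (\<mu> * (b - p)) - Si (\<mu> * (a - p))) {a..b}"
proof (rule fundamental_theorem_of_calculus_interior_strong[where S = "{p}"])
  show "continuous_on {a..b} (\<lambda>q. Si (\<mu> * (q - p)))"
    by (intro continuous_at_imp_continuous_on ballI continuous_within_compose3[OF isCont_Si])
       (auto intro!: continuous_intros)
  fix x assume x: "x \<in> {a<..<b} - {p}"
  have "((\<lambda>q. Si (\<mu> * (q - p))) has_real_derivative sinc (\<mu> * (x - p)) * (\<mu> * 1)) (at x)"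
    by (rule DERIV_chain2[OF DERIV_Si]) (auto intro!: derivative_eq_intros)
  moreover have "sinc (\<mu> * (x - p)) * (\<mu> * 1) = sin (\<mu> * (x - p)) / (x - p)"
    using x by auto
  ultimately show "((\<lambda>q. Si (\<mu> * (q - p))) has_vector_derivative sin (\<mu> * (x - p)) / (x - p)) (at x)"
    by (simp add: has_real_derivative_iff_has_vector_derivative)
qed (use assms in auto)

lemma has_integral_expm1_quot:
  assumes "a \<le> b"
  shows "((\<lambda>q. expm1_quot \<mu> (q - p)) has_integral
           complex_of_real (integral {a..b} (\<lambda>q. (cos (\<mu> * (q - p)) - 1) / (q - p)))
           + \<i> * complex_of_real (Si (\<mu> * (b - p)) - Si (\<mu> * (a - p)))) {a..b}"
proof -
  have "(\<lambda>q. (cos (\<mu> * (q - p)) - 1) / (q - p)) integrable_on {a..b}"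
    by (intro integrable_continuous_real continuous_on_compose2[OF continuous_on_cos_minus_one_quot])
       (auto intro!: continuous_intros)
  then show ?thesis
    unfolding expm1_quot_eq
    by (intro has_integral_add has_integral_mult_right has_integral_of_real integrable_integral
          has_integral_sin_shift_quot assms)
qed

lemma integrable_expm1_quot: "(\<lambda>q. expm1_quot \<mu> (q - p)) integrable_on {a..b}"
proof (cases "a \<le> b")
  case True
  then show ?thesis using has_integral_expm1_quot by blast
qed (simp add: integrable_on_empty)

lemma tendsto_integral_expm1_quot:
  "((\<lambda>R. integral {-R..R} (\<lambda>q. expm1_quot \<mu> (q - p))) \<longlongrightarrow> \<i> * complex_of_real (pi * sgn \<mu>)) at_top"
proof -
  define re im where "re R = integral {-R..R} (\<lambda>q. (cos (\<mu> * (q - p)) - 1) / (q - p))"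
    and "im R = Si (\<mu> * (R - p)) + Si (\<mu> * (R + p))" for R
  have decay: "\<bar>(cos (\<mu> * x) - 1) / x\<bar> \<le> 2 / \<bar>x\<bar>" for x
    using abs_cos_le_one[of "\<mu> * x"] by (auto simp: abs_divide intro!: divide_right_mono)
  have "(re \<longlongrightarrow> 0) at_top"
    unfolding re_def by (rule tendsto_integral_shifted_odd[OF _ continuous_on_cos_minus_one_quot decay]) simp
  moreover have "filterlim (\<lambda>R. - p + R) at_top at_top" "filterlim (\<lambda>R. p + R) at_top at_top"
    by (intro filterlim_tendsto_add_at_top[OF tendsto_const filterlim_ident])+
  then have "(im \<longlongrightarrow> pi / 2 * sgn \<mu> + pi / 2 * sgn \<mu>) at_top"
    unfolding im_def by (intro tendsto_add tendsto_Si_mult_at_top) (simp_all add: add.commute)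
  ultimately have limit: "((\<lambda>R. complex_of_real (re R) + \<i> * complex_of_real (im R))
      \<longlongrightarrow> \<i> * complex_of_real (pi * sgn \<mu>)) at_top"
    using tendsto_add[OF tendsto_of_real tendsto_mult_left[OF tendsto_of_real, of _ _ _ \<i>]] by fastforce
  have window:
    "complex_of_real (re R) + \<i> * complex_of_real (im R) = integral {-R..R} (\<lambda>q. expm1_quot \<mu> (q - p))"
    if "R \<ge> 0" for R
  proof -
    have "Si (\<mu> * (- R - p)) = - Si (\<mu> * (R + p))"
      using Si_minus[of "\<mu> * (R + p)"] by (simp add: algebra_simps)
    then show ?thesis
      using integral_unique[OF has_integral_expm1_quot[of "-R" R \<mu> p]] that by (simp add: re_def im_def)
  qed
  then have "\<forall>\<^sub>F R in at_top. complex_of_real (re R) + \<i> * complex_of_real (im R)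
      = integral {-R..R} (\<lambda>q. expm1_quot \<mu> (q - p))"
    unfolding eventually_at_top_linorder by blast
  with limit show ?thesis by (rule Lim_transform_eventually)
qed

section \<open>The Fourier integral of a product of two sinc functions\<close>

definition pole_term :: "real \<Rightarrow> real \<Rightarrow> real \<Rightarrow> real \<Rightarrow> complex" where
  "pole_term \<kappa> t \<theta> x =
     exp (- \<i> * complex_of_real (t * x)) * complex_of_real (sin (\<kappa> * x) * sin (\<kappa> * x + \<theta>) / x)"

text \<open>The three coefficients sum to zero, so the constants \<open>-1\<close> inside \<^const>\<open>expm1_quot\<close>
  cancel: the non-integrable pole is expressed through locally integrable kernels.\<close>

lemma pole_term_eq_expm1_quot:
  "pole_term \<kappa> t \<theta> x =
     - (exp (\<i> * complex_of_real \<theta>) * expm1_quot (2 * \<kappa> - t) x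
        - (exp (\<i> * complex_of_real \<theta>) + exp (- \<i> * complex_of_real \<theta>)) * expm1_quot (- t) x
        + exp (- \<i> * complex_of_real \<theta>) * expm1_quot (- (2 * \<kappa> + t)) x) / 4"
proof (cases "x = 0")
  case False
  define A E T where "A = exp (\<i> * complex_of_real (\<kappa> * x))" and "E = exp (\<i> * complex_of_real \<theta>)"
    and "T = exp (- \<i> * complex_of_real (t * x))"
  have nonzero: "A \<noteq> 0" "E \<noteq> 0" "complex_of_real x \<noteq> 0" using False by (simp_all add: A_def E_def)
  have up: "exp (\<i> * complex_of_real ((2 * \<kappa> - t) * x)) = A\<^sup>2 * T"
    unfolding A_def T_def power2_eq_square exp_add[symmetric] by (simp add: algebra_simps)
  have down: "exp (\<i> * complex_of_real (- (2 * \<kappa> + t) * x)) = T / A\<^sup>2"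
    unfolding A_def T_def power2_eq_square exp_add[symmetric] exp_diff[symmetric] by (simp add: algebra_simps)
  have mid: "exp (\<i> * complex_of_real (- t * x)) = T"
    unfolding T_def by simp
  have inv: "exp (- \<i> * complex_of_real \<theta>) = 1 / E"
    unfolding E_def by (simp add: exp_minus inverse_eq_divide)
  have sin1: "complex_of_real (sin (\<kappa> * x)) = (A - 1 / A) / (2 * \<i>)"
    unfolding A_def by (rule sin_of_real_exp)
  have sin2: "complex_of_real (sin (\<kappa> * x + \<theta>)) = (A * E - 1 / (A * E)) / (2 * \<i>)"
    unfolding A_def E_def sin_of_real_exp exp_add[symmetric] by (simp add: algebra_simps)
  show ?thesis
    unfolding pole_term_def expm1_quot_def up down mid inv T_def[symmetric] E_def[symmetric]
    unfolding of_real_divide of_real_mult sin1 sin2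
    using nonzero by (simp add: field_simps power2_eq_square)
qed (simp add: pole_term_def expm1_quot_def)

lemma integrable_pole_term: "(\<lambda>q. pole_term \<kappa> t \<theta> (q - p)) integrable_on {a..b}"
  unfolding pole_term_eq_expm1_quot
  by (intro integrable_on_divide integrable_neg integrable_add integrable_diff integrable_on_mult_right
        integrable_expm1_quot)

text \<open>\<^const>\<open>pole_term\<close> is not absolutely integrable; this is the limit of its integrals over
  symmetric intervals.\<close>

definition pole_integral :: "real \<Rightarrow> real \<Rightarrow> real \<Rightarrow> complex" where
  "pole_integral \<kappa> t \<theta> =
     - \<i> * complex_of_real pi *
       (exp (\<i> * complex_of_real \<theta>) * complex_of_real (sgn (2 * \<kappa> - t))
        - (exp (\<i> * complex_of_real \<theta>) + exp (- \<i> * complex_of_real \<theta>)) * complex_of_real (sgn (- t))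
        + exp (- \<i> * complex_of_real \<theta>) * complex_of_real (sgn (- (2 * \<kappa> + t)))) / 4"

lemma tendsto_integral_pole_term:
  "((\<lambda>R. integral {-R..R} (\<lambda>q. pole_term \<kappa> t \<theta> (q - p))) \<longlongrightarrow> pole_integral \<kappa> t \<theta>) at_top"
proof -
  define E E' where "E = exp (\<i> * complex_of_real \<theta>)" and "E' = exp (- \<i> * complex_of_real \<theta>)"
  define J where "J \<mu> R = integral {-R..R} (\<lambda>q. expm1_quot \<mu> (q - p))" for \<mu> R
  have "((\<lambda>q. pole_term \<kappa> t \<theta> (q - p)) has_integral
          - (E * J (2 * \<kappa> - t) R - (E + E') * J (- t) R + E' * J (- (2 * \<kappa> + t)) R) / 4) {-R..R}" for R
    unfolding pole_term_eq_expm1_quot E_def E'_def J_def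
    by (intro has_integral_divide has_integral_neg has_integral_add has_integral_diff
          has_integral_mult_right integrable_integral integrable_expm1_quot)
  then have window: "integral {-R..R} (\<lambda>q. pole_term \<kappa> t \<theta> (q - p))
      = - (E * J (2 * \<kappa> - t) R - (E + E') * J (- t) R + E' * J (- (2 * \<kappa> + t)) R) / 4" for R
    by (rule integral_unique)
  have "((\<lambda>R. - (E * J (2 * \<kappa> - t) R - (E + E') * J (- t) R + E' * J (- (2 * \<kappa> + t)) R) / 4)
         \<longlongrightarrow> - (E * (\<i> * complex_of_real (pi * sgn (2 * \<kappa> - t)))
                - (E + E') * (\<i> * complex_of_real (pi * sgn (- t)))
                + E' * (\<i> * complex_of_real (pi * sgn (- (2 * \<kappa> + t))))) / 4) at_top"
    unfolding J_def by (intro tendsto_intros tendsto_integral_expm1_quot) simp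
  also have "- (E * (\<i> * complex_of_real (pi * sgn (2 * \<kappa> - t)))
                - (E + E') * (\<i> * complex_of_real (pi * sgn (- t)))
                + E' * (\<i> * complex_of_real (pi * sgn (- (2 * \<kappa> + t))))) / 4 = pole_integral \<kappa> t \<theta>"
    unfolding pole_integral_def E_def E'_def by (simp add: algebra_simps)
  finally show ?thesis unfolding window .
qed

lemma pole_integral_inside:
  assumes "0 < t" "t < 2 * \<kappa>"
  shows "pole_integral \<kappa> t \<theta> = - \<i> * complex_of_real pi * exp (\<i> * complex_of_real \<theta>) / 2"
proof -
  have "sgn (2 * \<kappa> - t) = 1" "sgn (- t) = -1" "sgn (- (2 * \<kappa> + t)) = -1"
    using assms by simp_all
  then show ?thesis unfolding pole_integral_def by (simp add: algebra_simps)
qed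

lemma pole_integral_outside:
  assumes "0 \<le> \<kappa>" "2 * \<kappa> < \<bar>t\<bar>"
  shows "pole_integral \<kappa> t \<theta> = 0"
proof -
  have "sgn (2 * \<kappa> - t) = - sgn t" "sgn (- t) = - sgn t" "sgn (- (2 * \<kappa> + t)) = - sgn t"
    using assms by (auto simp: sgn_if)
  then show ?thesis unfolding pole_integral_def by (simp add: algebra_simps)
qed

lemma pole_integral_edge:
  assumes "0 < \<kappa>" "\<bar>t\<bar> = 2 * \<kappa>"
  shows "pole_integral \<kappa> t \<theta> = - \<i> * complex_of_real (pi * sgn t) * exp (\<i> * complex_of_real (sgn t * \<theta>)) / 4"
proof (cases "t > 0")
  case True
  then have "t = 2 * \<kappa>" using assms by simp
  then show ?thesis using assms unfolding pole_integral_def by (simp add: algebra_simps)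
next
  case False
  then have "t = - 2 * \<kappa>" using assms by simp
  then show ?thesis using assms unfolding pole_integral_def by (simp add: algebra_simps exp_minus)
qed

definition fourier_sinc_pair :: "real \<Rightarrow> real \<Rightarrow> real \<Rightarrow> real \<Rightarrow> real \<Rightarrow> complex" where
  "fourier_sinc_pair \<kappa> t c c' q =
     exp (- \<i> * complex_of_real (t * q)) *
     complex_of_real (sin (\<kappa> * (q - c)) / (q - c) * (sin (\<kappa> * (q - c')) / (q - c')))"

lemma fourier_sinc_pair_partial_fractions:
  assumes "c \<noteq> c'"
  shows "fourier_sinc_pair \<kappa> t c c' q =
    (exp (- \<i> * complex_of_real (t * c)) * pole_term \<kappa> t (\<kappa> * (c - c')) (q - c)
     - exp (- \<i> * complex_of_real (t * c')) * pole_term \<kappa> t (\<kappa> * (c' - c)) (q - c'))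
    / complex_of_real (c - c')"
proof -
  define P Q where "P = sin (\<kappa> * (q - c)) * sin (\<kappa> * (q - c')) / (q - c)"
    and "Q = sin (\<kappa> * (q - c')) * sin (\<kappa> * (q - c)) / (q - c')"
  have shift: "\<kappa> * (q - c) + \<kappa> * (c - c') = \<kappa> * (q - c')" "\<kappa> * (q - c') + \<kappa> * (c' - c) = \<kappa> * (q - c)"
    by (simp_all add: algebra_simps)
  have phase: "exp (- \<i> * complex_of_real (t * r)) * exp (- \<i> * complex_of_real (t * (q - r)))
      = exp (- \<i> * complex_of_real (t * q))" for r
    unfolding exp_add[symmetric] by (simp add: algebra_simps)
  have "sin (\<kappa> * (q - c)) / (q - c) * (sin (\<kappa> * (q - c')) / (q - c')) = (P - Q) / (c - c')"
  proof (cases "q = c \<or> q = c'")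
    case False
    then have "q - c \<noteq> 0" "q - c' \<noteq> 0" "c - c' \<noteq> 0" using assms by auto
    then show ?thesis unfolding P_def Q_def by (simp add: divide_simps) (simp add: algebra_simps)
  qed (auto simp: P_def Q_def)
  then have "fourier_sinc_pair \<kappa> t c c' q
      = (exp (- \<i> * complex_of_real (t * q)) * complex_of_real P
         - exp (- \<i> * complex_of_real (t * q)) * complex_of_real Q) / complex_of_real (c - c')"
    unfolding fourier_sinc_pair_def by (simp add: right_diff_distrib)
  also have "\<dots> = (exp (- \<i> * complex_of_real (t * c)) * pole_term \<kappa> t (\<kappa> * (c - c')) (q - c)
     - exp (- \<i> * complex_of_real (t * c')) * pole_term \<kappa> t (\<kappa> * (c' - c)) (q - c'))
    / complex_of_real (c - c')"
    unfolding pole_term_def shift P_def Q_def by (simp only: mult.assoc[symmetric] phase)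
  finally show ?thesis .
qed

lemma abs_sin_mult_quot_le: "\<bar>sin (\<kappa> * x) / (x::real)\<bar> \<le> 2 * (\<bar>\<kappa>\<bar> + 1) / (1 + \<bar>x\<bar>)"
proof (cases "\<bar>x\<bar> \<le> 1")
  case True
  have "\<bar>sin (\<kappa> * x) / x\<bar> \<le> \<bar>\<kappa>\<bar>"
    using abs_sin_x_le_abs_x[of "\<kappa> * x"] by (cases "x = 0") (auto simp: abs_mult divide_le_eq)
  also have "\<dots> \<le> 2 * (\<bar>\<kappa>\<bar> + 1) / (1 + \<bar>x\<bar>)"
  proof -
    have "\<bar>\<kappa>\<bar> * (1 + \<bar>x\<bar>) \<le> \<bar>\<kappa>\<bar> * 2"
      using True by (intro mult_left_mono) auto
    then show ?thesis by (simp add: pos_le_divide_eq add_pos_nonneg)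
  qed
  finally show ?thesis .
next
  case False
  have "\<bar>sin (\<kappa> * x) / x\<bar> \<le> 1 / \<bar>x\<bar>"
    using abs_sin_le_one False by (simp add: abs_divide divide_right_mono)
  also have "\<dots> \<le> 2 / (1 + \<bar>x\<bar>)"
    using False by (simp add: divide_simps)
  also have "\<dots> \<le> 2 * (\<bar>\<kappa>\<bar> + 1) / (1 + \<bar>x\<bar>)"
    by (simp add: divide_right_mono)
  finally show ?thesis .
qed

lemma abs_sin_mult_shift_quot_le:
  fixes \<kappa> q c :: real
  shows "\<bar>sin (\<kappa> * (q - c)) / (q - c)\<bar> \<le> 2 * (\<bar>\<kappa>\<bar> + 1) * (1 + \<bar>c\<bar>) / (1 + \<bar>q\<bar>)"
proof -
  have "\<bar>q\<bar> \<le> \<bar>c\<bar> + \<bar>q - c\<bar>"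
    using abs_triangle_ineq[of c "q - c"] by simp
  moreover have "(1 + \<bar>c\<bar>) * (1 + \<bar>q - c\<bar>) = 1 + \<bar>c\<bar> + \<bar>q - c\<bar> + \<bar>c\<bar> * \<bar>q - c\<bar>"
    by (simp add: algebra_simps)
  moreover have "0 \<le> \<bar>c\<bar> * \<bar>q - c\<bar>" by simp
  ultimately have "1 + \<bar>q\<bar> \<le> (1 + \<bar>c\<bar>) * (1 + \<bar>q - c\<bar>)"
    by linarith
  then have "2 * (\<bar>\<kappa>\<bar> + 1) / (1 + \<bar>q - c\<bar>) \<le> 2 * (\<bar>\<kappa>\<bar> + 1) * (1 + \<bar>c\<bar>) / (1 + \<bar>q\<bar>)"
    by (simp add: divide_simps add_pos_nonneg) (simp add: mult.assoc mult_left_mono)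
  with abs_sin_mult_quot_le[of \<kappa> "q - c"] show ?thesis by linarith
qed

lemma norm_fourier_sinc_pair_le:
  "norm (fourier_sinc_pair \<kappa> t c c' q)
     \<le> (2 * (\<bar>\<kappa>\<bar> + 1))\<^sup>2 * (1 + \<bar>c\<bar>) * (1 + \<bar>c'\<bar>) * inverse (1 + q\<^sup>2)"
proof -
  define A B where "A = 2 * (\<bar>\<kappa>\<bar> + 1) * (1 + \<bar>c\<bar>)" and "B = 2 * (\<bar>\<kappa>\<bar> + 1) * (1 + \<bar>c'\<bar>)"
  have "norm (fourier_sinc_pair \<kappa> t c c' q)
      = \<bar>sin (\<kappa> * (q - c)) / (q - c)\<bar> * \<bar>sin (\<kappa> * (q - c')) / (q - c')\<bar>"
    using norm_exp_i_times[of "- (t * q)"] unfolding fourier_sinc_pair_def norm_mult norm_of_real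
    by (simp add: abs_mult)
  also have "\<dots> \<le> A / (1 + \<bar>q\<bar>) * (B / (1 + \<bar>q\<bar>))"
    unfolding A_def B_def by (intro mult_mono abs_sin_mult_shift_quot_le) auto
  also have "\<dots> \<le> A * B * inverse (1 + q\<^sup>2)"
    unfolding A_def B_def
    by (simp add: divide_simps add_pos_nonneg power2_eq_square) (simp add: algebra_simps)
  finally show ?thesis by (simp add: A_def B_def power2_eq_square algebra_simps)
qed

lemma integrable_fourier_sinc_pair: "fourier_sinc_pair \<kappa> t c c' integrable_on UNIV"
proof (rule integrable_on_lborel, rule Bochner_Integration.integrable_bound)
  show "integrable lborel
      (\<lambda>q. (2 * (\<bar>\<kappa>\<bar> + 1))\<^sup>2 * (1 + \<bar>c\<bar>) * (1 + \<bar>c'\<bar>) * inverse (1 + q\<^sup>2))"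
    using integrable_inverse_1_plus_square by (simp add: set_integrable_def)
  show "fourier_sinc_pair \<kappa> t c c' \<in> borel_measurable lborel"
    unfolding fourier_sinc_pair_def[abs_def] by measurable
  show "AE q in lborel. norm (fourier_sinc_pair \<kappa> t c c' q)
      \<le> norm ((2 * (\<bar>\<kappa>\<bar> + 1))\<^sup>2 * (1 + \<bar>c\<bar>) * (1 + \<bar>c'\<bar>) * inverse (1 + q\<^sup>2))"
    by (intro AE_I2 order_trans[OF norm_fourier_sinc_pair_le]) (simp only: real_norm_def abs_ge_self)
qed

text \<open>Absolute integrability lets the integral be computed along symmetric intervals, where the two
  partial fractions may be integrated separately.\<close>

lemma has_integral_fourier_sinc_pair:
  assumes "c \<noteq> c'"
  shows "(fourier_sinc_pair \<kappa> t c c' has_integral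
           (exp (- \<i> * complex_of_real (t * c)) * pole_integral \<kappa> t (\<kappa> * (c - c'))
            - exp (- \<i> * complex_of_real (t * c')) * pole_integral \<kappa> t (\<kappa> * (c' - c)))
           / complex_of_real (c - c')) UNIV"
    (is "(_ has_integral ?I) UNIV")
proof -
  define U W where "U = exp (- \<i> * complex_of_real (t * c))" and "W = exp (- \<i> * complex_of_real (t * c'))"
  define P P' where "P R = integral {-R..R} (\<lambda>q. pole_term \<kappa> t (\<kappa> * (c - c')) (q - c))"
    and "P' R = integral {-R..R} (\<lambda>q. pole_term \<kappa> t (\<kappa> * (c' - c)) (q - c'))" for R
  have "(fourier_sinc_pair \<kappa> t c c' has_integral (U * P R - W * P' R) / complex_of_real (c - c')) {-R..R}"
    for R
    unfolding fourier_sinc_pair_partial_fractions[OF assms, abs_def] U_def W_def P_def P'_def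
    by (intro has_integral_divide has_integral_diff has_integral_mult_right integrable_integral
          integrable_pole_term)
  then have "integral {-R..R} (fourier_sinc_pair \<kappa> t c c') = (U * P R - W * P' R) / complex_of_real (c - c')"
    for R
    by (rule integral_unique)
  moreover have "((\<lambda>R. (U * P R - W * P' R) / complex_of_real (c - c')) \<longlongrightarrow> ?I) at_top"
    unfolding U_def W_def P_def P'_def
    by (intro tendsto_intros tendsto_integral_pole_term) (use assms in simp)
  ultimately have "((\<lambda>R. integral {-R..R} (fourier_sinc_pair \<kappa> t c c')) \<longlongrightarrow> ?I) at_top"
    by simp
  moreover have integrable: "(fourier_sinc_pair \<kappa> t c c' has_integral integral UNIV (fourier_sinc_pair \<kappa> t c c')) UNIV"
    using integrable_fourier_sinc_pair by blast
  ultimately have "integral UNIV (fourier_sinc_pair \<kappa> t c c') = ?I"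
    using tendsto_unique[OF trivial_limit_at_top_linorder tendsto_integral_symmetric_interval] by blast
  with integrable show ?thesis by simp
qed

lemma has_integral_fourier_sinc_pair_inside:
  assumes "c \<noteq> c'" "0 < t" "t < 2 * \<kappa>"
  shows "(fourier_sinc_pair \<kappa> t c c' has_integral
           \<i> * complex_of_real pi
           * (exp (- \<i> * complex_of_real (t * c' + \<kappa> * (c - c')))
              - exp (- \<i> * complex_of_real (t * c - \<kappa> * (c - c'))))
           / (2 * complex_of_real (c - c'))) UNIV"
proof -
  define U W E E' where "U = exp (- \<i> * complex_of_real (t * c))"
    and "W = exp (- \<i> * complex_of_real (t * c'))"
    and "E = exp (\<i> * complex_of_real (\<kappa> * (c - c')))" and "E' = exp (\<i> * complex_of_real (\<kappa> * (c' - c)))"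
  have "(U * pole_integral \<kappa> t (\<kappa> * (c - c')) - W * pole_integral \<kappa> t (\<kappa> * (c' - c)))
          / complex_of_real (c - c')
      = \<i> * complex_of_real pi * (W * E' - U * E) / (2 * complex_of_real (c - c'))"
    unfolding pole_integral_inside[OF assms(2,3)] E_def[symmetric] E'_def[symmetric]
    using assms(1) by (simp add: field_simps)
  also have "W * E' - U * E = exp (- \<i> * complex_of_real (t * c' + \<kappa> * (c - c')))
              - exp (- \<i> * complex_of_real (t * c - \<kappa> * (c - c')))"
    unfolding U_def W_def E_def E'_def exp_minus_i_mult_exp_i by (simp add: algebra_simps)
  finally show ?thesis
    using has_integral_fourier_sinc_pair[OF assms(1), of \<kappa> t, folded U_def W_def] by simp
qed

lemma has_integral_fourier_sinc_pair_outside: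
  assumes "0 < \<kappa>" "c \<noteq> c'" "2 * \<kappa> \<le> \<bar>t\<bar>"
  shows "(fourier_sinc_pair \<kappa> t c c' has_integral 0) UNIV"
proof (cases "\<bar>t\<bar> = 2 * \<kappa>")
  case True
  have "(t - 2 * \<kappa> * sgn t) * (c - c') = 0" using True assms(1) by (auto simp: sgn_if)
  then have "t * c - sgn t * (\<kappa> * (c - c')) = t * c' - sgn t * (\<kappa> * (c' - c))"
    by (simp add: algebra_simps)
  then have "exp (- \<i> * complex_of_real (t * c)) * exp (\<i> * complex_of_real (sgn t * (\<kappa> * (c - c'))))
      = exp (- \<i> * complex_of_real (t * c')) * exp (\<i> * complex_of_real (sgn t * (\<kappa> * (c' - c))))"
    unfolding exp_minus_i_mult_exp_i by simp
  then show ?thesis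
    using has_integral_fourier_sinc_pair[OF assms(2), of \<kappa> t]
    unfolding pole_integral_edge[OF assms(1) True]
    by (simp add: algebra_simps)
next
  case False
  then show ?thesis
    using has_integral_fourier_sinc_pair[OF assms(2), of \<kappa> t] assms
    by (simp add: pole_integral_outside)
qed

section \<open>The decoherence factor\<close>

lemma decoh_integrand_eq_fourier_sinc_pair:
  "decoh_integrand \<alpha> g0 lam \<kappa>0 \<omega> n d\<tau> b b' =
     (\<lambda>q. complex_of_real (1 / (\<kappa>0 * pi)) *
          fourier_sinc_pair \<kappa>0 (\<alpha> * g0 * d\<tau> * \<omega> * real_of_int n)
            (2 * lam * b / (\<alpha> * g0 * d\<tau>)) (2 * lam * b' / (\<alpha> * g0 * d\<tau>)) q)"
  unfolding decoh_integrand_def fourier_sinc_pair_def Let_def by (simp add: mult.assoc)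

lemma has_integral_decoh_integrand_inside:
  assumes "lam \<noteq> 0" "\<kappa>0 \<noteq> 0" "\<alpha> * g0 * d\<tau> \<noteq> 0" "b \<noteq> b'"
    and "0 < \<alpha> * g0 * d\<tau> * \<omega> * real_of_int n" "\<alpha> * g0 * d\<tau> * \<omega> * real_of_int n < 2 * \<kappa>0"
  shows "(decoh_integrand \<alpha> g0 lam \<kappa>0 \<omega> n d\<tau> b b' has_integral
           \<i> * complex_of_real (\<alpha> * g0 * d\<tau> / (4 * lam * \<kappa>0)) * V_kl \<alpha> g0 lam \<kappa>0 \<omega> n d\<tau> b b') UNIV"
proof -
  define a t c c' where "a = \<alpha> * g0 * d\<tau>" and "t = \<alpha> * g0 * d\<tau> * \<omega> * real_of_int n"
    and "c = 2 * lam * b / a" and "c' = 2 * lam * b' / a"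
  have a: "a \<noteq> 0" and cc: "c \<noteq> c'" using assms by (simp_all add: a_def c_def c'_def)
  have phases: "t * c' + \<kappa>0 * (c - c') = 2 * (lam * (\<kappa>0 / a * (b - b') + \<omega> * real_of_int n * b'))"
    "t * c - \<kappa>0 * (c - c') = - 2 * (lam * (\<kappa>0 / a * (b - b') - \<omega> * real_of_int n * b))"
    using a by (simp_all add: a_def t_def c_def c'_def field_simps)
  have "exp (- \<i> * complex_of_real (t * c' + \<kappa>0 * (c - c')))
        - exp (- \<i> * complex_of_real (t * c - \<kappa>0 * (c - c')))
      = exp (- 2 * \<i> * complex_of_real (lam * (\<kappa>0 / a * (b - b') + \<omega> * real_of_int n * b')))
        - exp (2 * \<i> * complex_of_real (lam * (\<kappa>0 / a * (b - b') - \<omega> * real_of_int n * b)))"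
    unfolding phases by (simp add: algebra_simps)
  also have "\<dots> = complex_of_real (b - b') * V_kl \<alpha> g0 lam \<kappa>0 \<omega> n d\<tau> b b'"
    using assms(4) unfolding V_kl_def a_def[symmetric] by simp
  finally have numerator: "exp (- \<i> * complex_of_real (t * c' + \<kappa>0 * (c - c')))
        - exp (- \<i> * complex_of_real (t * c - \<kappa>0 * (c - c')))
      = complex_of_real (b - b') * V_kl \<alpha> g0 lam \<kappa>0 \<omega> n d\<tau> b b'" .
  have difference: "c - c' = 2 * lam * (b - b') / a"
    by (simp add: c_def c'_def diff_divide_distrib algebra_simps)
  have rescaled: "complex_of_real (1 / (\<kappa>0 * pi)) *
      (\<i> * complex_of_real pi
       * (exp (- \<i> * complex_of_real (t * c' + \<kappa>0 * (c - c')))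
          - exp (- \<i> * complex_of_real (t * c - \<kappa>0 * (c - c'))))
       / (2 * complex_of_real (c - c')))
    = \<i> * complex_of_real (a / (4 * lam * \<kappa>0)) * V_kl \<alpha> g0 lam \<kappa>0 \<omega> n d\<tau> b b'"
    using assms a unfolding numerator unfolding difference by (simp add: field_simps)
  have "((\<lambda>q. complex_of_real (1 / (\<kappa>0 * pi)) * fourier_sinc_pair \<kappa>0 t c c' q) has_integral
      \<i> * complex_of_real (a / (4 * lam * \<kappa>0)) * V_kl \<alpha> g0 lam \<kappa>0 \<omega> n d\<tau> b b') UNIV"
    unfolding rescaled[symmetric] using assms(5,6)
    by (intro has_integral_mult_right has_integral_fourier_sinc_pair_inside cc) (simp_all add: t_def)
  then show ?thesis
    unfolding decoh_integrand_eq_fourier_sinc_pair t_def[symmetric]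
    unfolding a_def[symmetric] unfolding c_def[symmetric] c'_def[symmetric] .
qed

lemma has_integral_decoh_integrand_outside:
  assumes "lam \<noteq> 0" "0 < \<kappa>0" "\<alpha> * g0 * d\<tau> \<noteq> 0" "b \<noteq> b'"
    and "2 * \<kappa>0 \<le> \<bar>\<alpha> * g0 * d\<tau> * \<omega> * real_of_int n\<bar>"
  shows "(decoh_integrand \<alpha> g0 lam \<kappa>0 \<omega> n d\<tau> b b' has_integral 0) UNIV"
proof -
  have "2 * lam * b / (\<alpha> * g0 * d\<tau>) \<noteq> 2 * lam * b' / (\<alpha> * g0 * d\<tau>)"
    using assms by (simp add: field_simps)
  from has_integral_mult_right[OF has_integral_fourier_sinc_pair_outside[OF assms(2) this assms(5)],
      where c = "complex_of_real (1 / (\<kappa>0 * pi))"]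
  show ?thesis unfolding decoh_integrand_eq_fourier_sinc_pair by simp
qed

lemma V_kl_eq_0:
  assumes "\<alpha> * g0 * d\<tau> \<noteq> 0" "\<alpha> * g0 * d\<tau> * \<omega> * real_of_int n = 2 * \<kappa>0"
  shows "V_kl \<alpha> g0 lam \<kappa>0 \<omega> n d\<tau> b b' = 0"
proof -
  have half: "\<kappa>0 / (\<alpha> * g0 * d\<tau>) = \<omega> * real_of_int n / 2"
    using assms by (simp add: field_simps)
  have "- (lam * (\<kappa>0 / (\<alpha> * g0 * d\<tau>) * (b - b') + \<omega> * real_of_int n * b'))
      = lam * (\<kappa>0 / (\<alpha> * g0 * d\<tau>) * (b - b') - \<omega> * real_of_int n * b)"
    unfolding half by (simp add: field_simps)
  then have "exp (- 2 * \<i> * complex_of_real (lam * (\<kappa>0 / (\<alpha> * g0 * d\<tau>) * (b - b') + \<omega> * real_of_int n * b')))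
      = exp (2 * \<i> * complex_of_real (lam * (\<kappa>0 / (\<alpha> * g0 * d\<tau>) * (b - b') - \<omega> * real_of_int n * b)))"
    by (metis mult_minus_left mult_minus_right of_real_minus)
  then show ?thesis unfolding V_kl_def by simp
qed

lemma has_integral_decoh_integrand:
  assumes "lam \<noteq> 0" "0 < \<kappa>0" "\<alpha> * g0 * d\<tau> \<noteq> 0" "b \<noteq> b'"
    and "0 < \<alpha> * g0 * d\<tau> * \<omega> * real_of_int n"
  shows "(decoh_integrand \<alpha> g0 lam \<kappa>0 \<omega> n d\<tau> b b' has_integral
           \<i> * complex_of_real (\<alpha> * g0 * d\<tau> / (4 * lam * \<kappa>0)) * V_kl \<alpha> g0 lam \<kappa>0 \<omega> n d\<tau> b b'
           * complex_of_real (heaviside (2 * \<kappa>0 - \<alpha> * g0 * d\<tau> * \<omega> * real_of_int n))) UNIV"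
proof -
  consider "\<alpha> * g0 * d\<tau> * \<omega> * real_of_int n < 2 * \<kappa>0"
    | "\<alpha> * g0 * d\<tau> * \<omega> * real_of_int n = 2 * \<kappa>0"
    | "\<alpha> * g0 * d\<tau> * \<omega> * real_of_int n > 2 * \<kappa>0"
    by linarith
  then show ?thesis
  proof cases
    case 1
    then show ?thesis
      using has_integral_decoh_integrand_inside[OF assms(1) _ assms(3,4,5)] assms(2)
      by (simp add: heaviside_def)
  next
    case 2
    then show ?thesis
      using has_integral_decoh_integrand_outside[OF assms(1-4)] V_kl_eq_0[OF assms(3)] by simp
  next
    case 3
    then show ?thesis
      using has_integral_decoh_integrand_outside[OF assms(1-4)] by (simp add: heaviside_def)
  qed
qed

theorem mainTheorem6:
  fixes \<alpha> g0 lam \<kappa>0 \<omega> :: real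
  assumes "\<alpha> > 0" "g0 > 0" "lam > 0" "\<kappa>0 > 0" "\<omega> > 0"
  shows
    "(\<forall>k l :: nat. \<forall>d\<tau> b b'. l < k \<and> d\<tau> > 0 \<and> b \<noteq> b' \<longrightarrow>
        (decoh_integrand \<alpha> g0 lam \<kappa>0 \<omega> (int k - int l) d\<tau> b b' has_integral
          (\<i> * complex_of_real (\<alpha> * g0 * d\<tau> / (4 * lam * \<kappa>0))
           * V_kl \<alpha> g0 lam \<kappa>0 \<omega> (int k - int l) d\<tau> b b'
           * complex_of_real (heaviside (2 * \<kappa>0 - \<omega> * \<alpha> * g0 * real (k - l) * d\<tau>)))) UNIV)
   \<and> (\<forall>k l :: nat. \<forall>d\<tau> b b'. l < k \<and> b \<noteq> b' \<and>
        d\<tau> = 2 * \<kappa>0 / (\<alpha> * g0 * \<omega> * real (k - l)) \<longrightarrow>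
        V_kl \<alpha> g0 lam \<kappa>0 \<omega> (int k - int l) d\<tau> b b' = 0)
   \<and> (\<forall>k l :: nat. \<forall>d\<tau> b b'. k \<noteq> l \<and> b \<noteq> b' \<and>
        d\<tau> \<ge> 2 * \<kappa>0 / (\<alpha> * g0 * \<omega>) \<longrightarrow>
        decoh_factor \<alpha> g0 lam \<kappa>0 \<omega> k l d\<tau> b b' = 0)"
proof (intro conjI allI impI)
  fix k l :: nat and d\<tau> b b' :: real
  assume "l < k \<and> 0 < d\<tau> \<and> b \<noteq> b'"
  then show "(decoh_integrand \<alpha> g0 lam \<kappa>0 \<omega> (int k - int l) d\<tau> b b' has_integral
          (\<i> * complex_of_real (\<alpha> * g0 * d\<tau> / (4 * lam * \<kappa>0))
           * V_kl \<alpha> g0 lam \<kappa>0 \<omega> (int k - int l) d\<tau> b b'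
           * complex_of_real (heaviside (2 * \<kappa>0 - \<omega> * \<alpha> * g0 * real (k - l) * d\<tau>)))) UNIV"
    using has_integral_decoh_integrand[of lam \<kappa>0 \<alpha> g0 d\<tau> b b' \<omega> "int k - int l"] assms
    by (simp add: of_nat_diff mult_ac)
next
  fix k l :: nat and d\<tau> b b' :: real
  assume "l < k \<and> b \<noteq> b' \<and> d\<tau> = 2 * \<kappa>0 / (\<alpha> * g0 * \<omega> * real (k - l))"
  then show "V_kl \<alpha> g0 lam \<kappa>0 \<omega> (int k - int l) d\<tau> b b' = 0"
    using assms by (intro V_kl_eq_0) (auto simp: of_nat_diff)
next
  fix k l :: nat and d\<tau> b b' :: real
  assume h: "k \<noteq> l \<and> b \<noteq> b' \<and> 2 * \<kappa>0 / (\<alpha> * g0 * \<omega>) \<le> d\<tau>"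
  moreover have "0 < 2 * \<kappa>0 / (\<alpha> * g0 * \<omega>)" using assms by simp
  ultimately have "0 < d\<tau>" by linarith
  have "2 * \<kappa>0 \<le> \<alpha> * g0 * d\<tau> * \<omega>"
    using h assms by (simp add: divide_le_eq mult_ac)
  also have "\<dots> \<le> \<bar>\<alpha> * g0 * d\<tau> * \<omega> * real_of_int (int k - int l)\<bar>"
    using h assms \<open>0 < d\<tau>\<close> mult_left_mono[of 1 "\<bar>real_of_int (int k - int l)\<bar>" "\<alpha> * g0 * d\<tau> * \<omega>"]
    by (auto simp: abs_mult)
  finally show "decoh_factor \<alpha> g0 lam \<kappa>0 \<omega> k l d\<tau> b b' = 0"
    unfolding decoh_factor_def using h assms \<open>0 < d\<tau>\<close>
    by (intro integral_unique has_integral_decoh_integrand_outside) auto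
qed

end
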